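(* Let $X,Y\in M_n$ with entries in $\mathbb R$ or $\mathbb C$. Then $Y$ is a $\circ$-pseudoinverse of $X$ if and only if $\phi(Y)$ is a pseudoinverse of $\phi(X)$ among matrices in $S_{n+1}$; and $Y$ is the $\circ$-Moore–Penrose inverse of $X$ if and only if $\phi(Y)$ satisfies the four Moore–Penrose conditions for $\phi(X)$. In particular, the Moore–Penrose inverse $\phi(X)^+$ of $\phi(X)$ lies in $S_{n+1}$ and equals $\phi(X^\oplus)$, where $X^\oplus$ is the $\circ$-Moore–Penrose inverse of $X$.
   Context: Matrices are over $F=\mathbb R$ or $\mathbb C$; $A^*$ denotes conjugate transpose. $M_n$ is the set of $n\times n$ matrices over $F$; $S_{n}$ is the set of $n\times n$ matrices all of whose row sums and column sums are zero. $\mathbf 1$ is the all-ones column vector, $J_n:=[I_n\mid -\mathbf 1]$ (an $n\times(n+1)$ matrix), $K_n:=J_nJ_n^*$, and $\phi(X):=J_n^*XJ_n$. The twisted product on $M_n$ is $X\circ Y:=XK_nY$. A pseudoinverse of a matrix $A$ is any $B$ with $ABA=A$; the Moore–Penrose inverse $A^+$ is the unique $B$ with $ABA=A$, $BAB=B$, $(AB)^*=AB$, $(BA)^*=BA$. A $\circ$-pseudoinverse of $X\in M_n$ is any $Y\in M_n$ with $X\circ Y\circ X=X$; a $\circ$-Moore–Penrose inverse of $X$ is a $Y\in M_n$ with $X\circ Y\circ X=X$, $Y\circ X\circ Y=Y$, $(X\circ Y)^*=X\circ Y$, $(Y\circ X)^*=Y\circ X$. *)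

theory Defs
  imports "Jordan_Normal_Form.Schur_Decomposition"
begin

text \<open>Matrices are Jordan_Normal_Form matrices over a field with conjugation;
  the theorem is instantiated to real and complex. The conjugate transpose A* is
  mat_adjoint A.\<close>

definition zero_sum_mats :: "nat \<Rightarrow> 'a :: conjugatable_field mat set" where
  "zero_sum_mats n = {A \<in> carrier_mat n n.
      (\<forall>i<n. (\<Sum>j<n. A $$ (i, j)) = 0) \<and> (\<forall>j<n. (\<Sum>i<n. A $$ (i, j)) = 0)}"

definition J_mat :: "nat \<Rightarrow> 'a :: conjugatable_field mat" where
  "J_mat n = mat n (n + 1) (\<lambda>(i, j). if j < n then (if i = j then 1 else 0) else - 1)"

definition K_mat :: "nat \<Rightarrow> 'a :: conjugatable_field mat" where
  "K_mat n = J_mat n * mat_adjoint (J_mat n)"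

definition phi :: "nat \<Rightarrow> 'a :: conjugatable_field mat \<Rightarrow> 'a mat" where
  "phi n X = mat_adjoint (J_mat n) * X * J_mat n"

definition twisted_prod :: "nat \<Rightarrow> 'a :: conjugatable_field mat \<Rightarrow> 'a mat \<Rightarrow> 'a mat" where
  "twisted_prod n X Y = X * K_mat n * Y"

definition is_pinv :: "'a :: conjugatable_field mat \<Rightarrow> 'a mat \<Rightarrow> bool" where
  "is_pinv A B \<longleftrightarrow> B \<in> carrier_mat (dim_col A) (dim_row A) \<and> A * B * A = A"

definition is_MP :: "'a :: conjugatable_field mat \<Rightarrow> 'a mat \<Rightarrow> bool" where
  "is_MP A B \<longleftrightarrow> B \<in> carrier_mat (dim_col A) (dim_row A) \<and> A * B * A = A \<and> B * A * B = B
     \<and> mat_adjoint (A * B) = A * B \<and> mat_adjoint (B * A) = B * A"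

definition MP_inverse :: "'a :: conjugatable_field mat \<Rightarrow> 'a mat" where
  "MP_inverse A = (THE B. is_MP A B)"

definition circ_pinv :: "nat \<Rightarrow> 'a :: conjugatable_field mat \<Rightarrow> 'a mat \<Rightarrow> bool" where
  "circ_pinv n X Y \<longleftrightarrow> Y \<in> carrier_mat n n \<and>
     twisted_prod n (twisted_prod n X Y) X = X"

definition circ_MP :: "nat \<Rightarrow> 'a :: conjugatable_field mat \<Rightarrow> 'a mat \<Rightarrow> bool" where
  "circ_MP n X Y \<longleftrightarrow> Y \<in> carrier_mat n n \<and>
     twisted_prod n (twisted_prod n X Y) X = X \<and>
     twisted_prod n (twisted_prod n Y X) Y = Y \<and>
     mat_adjoint (twisted_prod n X Y) = twisted_prod n X Y \<and>
     mat_adjoint (twisted_prod n Y X) = twisted_prod n Y X"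

definition circ_MP_inverse :: "nat \<Rightarrow> 'a :: conjugatable_field mat \<Rightarrow> 'a mat" where
  "circ_MP_inverse n X = (THE Y. circ_MP n X Y)"

end

theory Submission
  imports Defs
begin

text \<open>The map phi X = J* X J embeds (M_n, twisted product X K Y) into ordinary
(n+1) x (n+1) matrices: it is multiplicative (phi X * phi Y = phi (X K Y),
since K = J J*), commutes with the adjoint, is injective (L J* = I for the
truncated identity L = [I_n | 0]) and takes values in the zero-sum matrices
S_(n+1), because J 1 = 0.  Hence every twisted-product Penrose equation for
X, Y is equivalent to the corresponding ordinary equation for phi X, phi Y,
which gives the two equivalences of the theorem.
For the last part we need that phi X has a Moore-Penrose inverse B at all and
that B lies in the image of phi.  Existence is proved over any ordered field
with conjugation (covering R and C): Gauss-Jordan elimination gives a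
generalized inverse of every matrix, hence a Hermitian one of every Hermitian
matrix, and the Gram matrices A* A and A A* then yield the Moore-Penrose
inverse.  Since B = A* (B* B) and B = (B B*) A*, the matrix B is of the form
J* Z and W J, which forces B = phi (L B L*).\<close>

section \<open>The conjugate transpose\<close>

abbreviation adj :: "'a :: conjugatable_field mat \<Rightarrow> 'a mat" where
  "adj \<equiv> mat_adjoint"

lemma adjoint_dim [simp]: "dim_row (adj A) = dim_col A" "dim_col (adj A) = dim_row A"
  unfolding mat_adjoint_def by auto

lemma adjoint_index [simp]:
  "i < dim_col A \<Longrightarrow> j < dim_row A \<Longrightarrow> adj A $$ (i, j) = conjugate (A $$ (j, i))"
  unfolding mat_adjoint_def by (auto simp: mat_of_rows_def)

lemma adjoint_carrier [simp, intro]: "A \<in> carrier_mat m n \<Longrightarrow> adj A \<in> carrier_mat n m"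
  by auto

lemma adjoint_adjoint [simp]: "adj (adj A) = A"
  by (rule eq_matI) auto

lemma conjugate_one [simp]: "conjugate (1 :: 'a :: conjugatable_field) = 1"
proof -
  have "conjugate 1 * conjugate 1 = conjugate (1::'a) * 1"
    by (simp flip: conjugate_dist_mul)
  thus ?thesis by simp
qed

text \<open>The simplifier does not push conjugate into an if-expression by itself.\<close>
lemma conjugate_indicator [simp]:
  "conjugate (if b then 1 else 0 :: 'a :: conjugatable_field) = (if b then 1 else 0)"
  by simp

lemma adjoint_zero [simp]: "adj (0\<^sub>m m n :: 'a :: conjugatable_field mat) = 0\<^sub>m n m"
  by (rule eq_matI) auto

lemma adjoint_one [simp]: "adj (1\<^sub>m n :: 'a :: conjugatable_field mat) = 1\<^sub>m n"
  by (rule eq_matI) auto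

lemma adjoint_mult:
  fixes A :: "'a :: conjugatable_field mat"
  assumes "dim_col A = dim_row B"
  shows "adj (A * B) = adj B * adj A"
proof (rule eq_matI)
  fix i j assume "i < dim_row (adj B * adj A)" "j < dim_col (adj B * adj A)"
  hence i: "i < dim_col B" and j: "j < dim_row A" by auto
  have "adj (A * B) $$ (i, j) = conjugate (\<Sum>k\<in>{0..<dim_row B}. A $$ (j, k) * B $$ (k, i))"
    using i j assms by (simp add: scalar_prod_def)
  also have "\<dots> = (\<Sum>k\<in>{0..<dim_row B}. conjugate (B $$ (k, i)) * conjugate (A $$ (j, k)))"
    by (simp add: sum_conjugate conjugate_dist_mul mult.commute)
  also have "\<dots> = (adj B * adj A) $$ (i, j)"
    using i j assms by (simp add: scalar_prod_def)
  finally show "adj (A * B) $$ (i, j) = (adj B * adj A) $$ (i, j)" .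
qed auto

text \<open>Associativity of the matrix product with dimension side conditions; together
  with adjoint_mult it lets the simplifier normalize products of matrices of known
  shapes (collected as mat_normalize).\<close>
lemma mat_mult_assoc:
  fixes A :: "'a :: semiring_0 mat"
  shows "dim_col A = dim_row B \<Longrightarrow> dim_col B = dim_row C \<Longrightarrow> A * B * C = A * (B * C)"
  by (rule assoc_mult_mat[of A "dim_row A" "dim_col A" B "dim_col B" C "dim_col C"]) auto

lemmas mat_normalize = mat_mult_assoc adjoint_mult

text \<open>Over an ordered field with conjugation, M* M = 0 forces M = 0: the diagonal
  entries of M* M are sums of the squared moduli of the columns of M.\<close>
lemma adjoint_mult_self_eq_zero:
  fixes M :: "'a :: conjugatable_ordered_field mat"
  assumes "adj M * M = 0\<^sub>m (dim_col M) (dim_col M)"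
  shows "M = 0\<^sub>m (dim_row M) (dim_col M)"
proof (rule eq_matI)
  fix i j assume "i < dim_row (0\<^sub>m (dim_row M) (dim_col M))" "j < dim_col (0\<^sub>m (dim_row M) (dim_col M))"
  hence i: "i < dim_row M" and j: "j < dim_col M" by auto
  have "(\<Sum>k\<in>{0..<dim_row M}. M $$ (k, j) * conjugate (M $$ (k, j))) = (adj M * M) $$ (j, j)"
    using j by (simp add: scalar_prod_def mult.commute)
  also have "\<dots> = 0" using assms j by simp
  finally have "\<forall>k\<in>{0..<dim_row M}. M $$ (k, j) * conjugate (M $$ (k, j)) = 0"
    by (subst (asm) sum_nonneg_eq_0_iff) (auto intro: conjugate_square_positive)
  thus "M $$ (i, j) = 0\<^sub>m (dim_row M) (dim_col M) $$ (i, j)" using i j by simp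
qed auto

section \<open>Generalized inverses\<close>

text \<open>A matrix R in reduced row echelon form has the generalized inverse G that
  maps the i-th unit vector to the f i-th unit vector for every pivot row i:
  then R G is the diagonal projection D onto the nonzero rows, and D R = R.\<close>
lemma row_echelon_ginv:
  fixes R :: "'a :: field mat"
  assumes R: "R \<in> carrier_mat nr nc" and pf: "pivot_fun R f nc"
  shows "\<exists>G \<in> carrier_mat nc nr. R * G * R = R"
proof
  note piv = pivot_funD[OF carrier_matD(1)[OF R] pf]
  define G :: "'a mat" where "G = mat nc nr (\<lambda>(j, i). if f i < nc \<and> j = f i then 1 else 0)"
  define D :: "'a mat" where "D = mat nr nr (\<lambda>(k, i). if f i < nc \<and> k = i then 1 else 0)"
  show "G \<in> carrier_mat nc nr" unfolding G_def by auto
  have RG: "R * G = D"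
  proof (rule eq_matI)
    fix k i assume "k < dim_row D" "i < dim_col D"
    hence k: "k < nr" and i: "i < nr" unfolding D_def by auto
    have "(R * G) $$ (k, i) = (\<Sum>j\<in>{0..<nc}. if f i < nc \<and> j = f i then R $$ (k, j) else 0)"
      using k i R unfolding G_def by (auto simp: scalar_prod_def intro: sum.cong)
    also have "\<dots> = (if f i < nc then R $$ (k, f i) else 0)"
      by (cases "f i < nc") auto
    also have "\<dots> = D $$ (k, i)"
      using piv(4)[OF i] piv(5)[OF i _ k] k i unfolding D_def by auto
    finally show "(R * G) $$ (k, i) = D $$ (k, i)" .
  qed (use R in \<open>auto simp: D_def G_def\<close>)
  have DR: "D * R = R"
  proof (rule eq_matI)
    fix k j assume "k < dim_row R" "j < dim_col R"
    hence k: "k < nr" and j: "j < nc" using R by auto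
    have "(D * R) $$ (k, j) = (\<Sum>i\<in>{0..<nr}. (if f i < nc \<and> k = i then 1 else 0) * R $$ (i, j))"
      using k j R unfolding D_def by (simp add: scalar_prod_def)
    also have "\<dots> = (\<Sum>i\<in>{0..<nr}. if i = k then (if f k < nc then R $$ (k, j) else 0) else 0)"
      by (intro sum.cong) auto
    also have "\<dots> = (if f k < nc then R $$ (k, j) else 0)" using k by simp
    also have "\<dots> = R $$ (k, j)"
      using piv(1)[OF k] piv(2)[OF k, of j] j by (cases "f k < nc") auto
    finally show "(D * R) $$ (k, j) = R $$ (k, j)" .
  qed (use R in \<open>auto simp: D_def\<close>)
  show "R * G * R = R" using RG DR by simp
qed

text \<open>Every matrix over a field has a generalized inverse: Gauss-Jordan elimination
  writes A = Q R with Q invertible and R in row echelon form, and if G is a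
  generalized inverse of R then G Q^-1 is one of A.\<close>
lemma ginv_exists:
  fixes A :: "'a :: field mat"
  assumes A: "A \<in> carrier_mat nr nc"
  shows "\<exists>G \<in> carrier_mat nc nr. A * G * A = A"
proof -
  obtain R B where gj: "gauss_jordan A (0\<^sub>m nr 0) = (R, B)" by fastforce
  obtain P where "P \<in> Units (ring_mat TYPE('a) nr undefined)" and RP: "R = P * A"
    using gauss_jordan_transform[OF A _ gj, of 0 undefined] by auto
  then obtain Q where P: "P \<in> carrier_mat nr nr" and Q: "Q \<in> carrier_mat nr nr"
    and QP: "Q * P = 1\<^sub>m nr"
    unfolding Units_def ring_mat_def by auto
  have R: "R \<in> carrier_mat nr nc" using RP P A by auto
  have AQR: "A = Q * R"
  proof -
    have "Q * R = (Q * P) * A" unfolding RP using Q P A by (simp add: assoc_mult_mat)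
    thus ?thesis using QP A by simp
  qed
  obtain f where "pivot_fun R f nc"
    using gauss_jordan_row_echelon[OF A gj] R unfolding row_echelon_form_def by auto
  then obtain G where G: "G \<in> carrier_mat nc nr" and RGR: "R * G * R = R"
    using row_echelon_ginv[OF R] by blast
  show ?thesis
  proof
    show "G * P \<in> carrier_mat nc nr" using G P by auto
    have "A * (G * P) * A = A * G * R" unfolding RP using A G P by (simp add: mat_normalize)
    also have "\<dots> = Q * (R * G * R)" unfolding AQR using Q R G by (simp add: mat_normalize)
    finally show "A * (G * P) * A = A" using RGR AQR by simp
  qed
qed

text \<open>A Hermitian matrix has a Hermitian generalized inverse: if G is any
  generalized inverse of H = H*, then so is G*, and hence G H G* is a Hermitian one.\<close>
lemma hermitian_ginv_exists:
  fixes H :: "'a :: conjugatable_field mat"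
  assumes H: "H \<in> carrier_mat k k" and herm: "adj H = H"
  shows "\<exists>G \<in> carrier_mat k k. adj G = G \<and> H * G * H = H"
proof -
  obtain G where G: "G \<in> carrier_mat k k" and HGH: "H * G * H = H"
    using ginv_exists[OF H] by auto
  have "H * adj G * H = adj (H * G * H)" using H G herm by (simp add: mat_normalize)
  hence HGH': "H * adj G * H = H" using HGH herm by simp
  show ?thesis
  proof (intro bexI conjI)
    show "G * H * adj G \<in> carrier_mat k k" using G H by auto
    show "adj (G * H * adj G) = G * H * adj G" using H G herm by (simp add: mat_normalize)
    have "H * (G * H * adj G) * H = (H * G * H) * adj G * H" using H G by (simp add: mat_normalize)
    thus "H * (G * H * adj G) * H = H" using HGH HGH' by simp
  qed
qed

lemma mat_diff_eq_zero_iff: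
  fixes X :: "'a :: ab_group_add mat"
  assumes "X \<in> carrier_mat m n" "Y \<in> carrier_mat m n"
  shows "X - Y = 0\<^sub>m m n \<longleftrightarrow> X = Y"
proof
  assume diff: "X - Y = 0\<^sub>m m n"
  show "X = Y"
  proof (rule eq_matI)
    fix i j assume "i < dim_row Y" "j < dim_col Y"
    thus "X $$ (i, j) = Y $$ (i, j)"
      using assms arg_cong[OF diff, of "\<lambda>M. M $$ (i, j)"] by simp
  qed (use assms in auto)
qed (use assms in simp)

text \<open>Cancellation through the Gram matrix: a generalized inverse G of A* A
  satisfies A G A* A = A.  With E = G A* A - I one has (A E)* (A E) = E* (A* A E) = 0,
  so A E = 0.\<close>
lemma gram_ginv_cancel:
  fixes A :: "'a :: conjugatable_ordered_field mat"
  assumes A: "A \<in> carrier_mat m n" and G: "G \<in> carrier_mat n n"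
    and HGH: "adj A * A * G * (adj A * A) = adj A * A"
  shows "A * G * adj A * A = A"
proof -
  define H where "H = adj A * A"
  have H: "H \<in> carrier_mat n n" unfolding H_def using A by auto
  define E where "E = G * H - 1\<^sub>m n"
  have E: "E \<in> carrier_mat n n" unfolding E_def using G H by auto
  have distrib: "M * E = M * (G * H) - M" if "M \<in> carrier_mat k n" for M :: "'a mat" and k
    unfolding E_def using that G H by (subst mult_minus_distrib_mat) auto
  have "H * (G * H) = H" using HGH H G unfolding H_def by (simp add: mat_normalize)
  hence "H * E = 0\<^sub>m n n" using distrib[OF H] H by simp
  hence "adj (A * E) * (A * E) = 0\<^sub>m n n"
    using A E unfolding H_def by (simp add: mat_normalize)
  hence "A * E = 0\<^sub>m m n"
    using adjoint_mult_self_eq_zero[of "A * E"] A E by simp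
  hence "A * (G * H) = A"
    using distrib[OF A] A G H by (simp add: mat_diff_eq_zero_iff)
  thus ?thesis unfolding H_def using A G by (simp add: mat_normalize)
qed

section \<open>The Moore-Penrose inverse\<close>

text \<open>Existence: with Hermitian generalized inverses G of A* A and F of A A*,
  the matrix A* F A G A* satisfies the four Penrose equations; the cancellation
  lemma gives A G A* A = A and A A* F A = A (the latter from A* F A A* = A*).\<close>
lemma MP_exists:
  fixes A :: "'a :: conjugatable_ordered_field mat"
  assumes A: "A \<in> carrier_mat m n"
  shows "\<exists>B. is_MP A B"
proof -
  have gram: "adj A * A \<in> carrier_mat n n" "adj (adj A * A) = adj A * A"
    and gram': "A * adj A \<in> carrier_mat m m" "adj (A * adj A) = A * adj A"
    using A by (auto simp: mat_normalize)
  obtain G where G: "G \<in> carrier_mat n n" and hG: "adj G = G"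
    and gG: "adj A * A * G * (adj A * A) = adj A * A"
    using hermitian_ginv_exists[OF gram] by auto
  obtain F where F: "F \<in> carrier_mat m m" and hF: "adj F = F"
    and gF: "A * adj A * F * (A * adj A) = A * adj A"
    using hermitian_ginv_exists[OF gram'] by auto
  have AGA: "A * G * adj A * A = A" by (rule gram_ginv_cancel[OF A G gG])
  have "adj A * F * A * adj A = adj A" using gram_ginv_cancel[of "adj A" n m F] A F gF by simp
  hence "adj (adj A * F * A * adj A) = A" by simp
  hence AFA: "A * adj A * F * A = A" using A F hF by (simp add: mat_normalize)
  have AFA_right: "A * (adj A * (F * (A * Z))) = A * Z" if "dim_row Z = n" for Z
    using A F that arg_cong[OF AFA, of "\<lambda>M. M * Z"] by (simp add: mat_normalize)
  have AGA': "A * (G * (adj A * A)) = A" using AGA A G by (simp add: mat_normalize)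
  define B where "B = adj A * F * A * G * adj A"
  have AB: "A * B = A * (G * adj A)" unfolding B_def using A F G by (simp add: mat_normalize AFA_right)
  have BA: "B * A = adj A * (F * A)" unfolding B_def using A F G by (simp add: mat_normalize AGA')
  show ?thesis unfolding is_MP_def
  proof (intro exI conjI)
    show "B \<in> carrier_mat (dim_col A) (dim_row A)" unfolding B_def using A F G by auto
    show "A * B * A = A" unfolding AB using A G by (simp add: mat_normalize AGA')
    show "B * A * B = B" unfolding BA using A F G by (simp add: mat_normalize B_def AFA_right)
    show "adj (A * B) = A * B" unfolding AB using A G hG by (simp add: mat_normalize)
    show "adj (B * A) = B * A" unfolding BA using A F hF by (simp add: mat_normalize)
  qed
qed

text \<open>Uniqueness (Penrose): for two Moore-Penrose inverses X, Y of A both X and Y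
  equal X A Y.\<close>
lemma MP_unique:
  fixes A :: "'a :: conjugatable_field mat"
  assumes "is_MP A X" "is_MP A Y"
  shows "X = Y"
proof -
  define m n where "m = dim_row A" and "n = dim_col A"
  have A: "A \<in> carrier_mat m n" unfolding m_def n_def by auto
  from assms have X: "X \<in> carrier_mat n m" and Y: "Y \<in> carrier_mat n m"
    and x1: "A * X * A = A" and x2: "X * A * X = X" and x3: "adj (A * X) = A * X"
    and x4: "adj (X * A) = X * A"
    and y1: "A * Y * A = A" and y2: "Y * A * Y = Y" and y3: "adj (A * Y) = A * Y"
    and y4: "adj (Y * A) = Y * A"
    unfolding is_MP_def m_def n_def by auto
  have AAY: "adj A * (A * Y) = adj A"
    using arg_cong[OF y1, of adj] y3 A Y by (simp add: mat_normalize)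
  have XAA: "X * A * adj A = adj A"
    using arg_cong[OF x1, of adj] x4 A X by (simp add: mat_normalize)
  have XXA: "X * (adj X * adj A) = X"
    using x2 x3 A X by (metis adjoint_mult carrier_matD mat_mult_assoc)
  have YAY: "adj A * adj Y * Y = Y"
    using y2 y4 A Y by (metis adjoint_mult carrier_matD)
  have "X = X * (adj X * (adj A * (A * Y)))" using XXA AAY by simp
  also have "\<dots> = (X * (adj X * adj A)) * (A * Y)" using A X Y by (simp add: mat_normalize)
  also have "\<dots> = X * A * Y" using XXA A X Y by (simp add: mat_normalize)
  also have "\<dots> = (X * A * adj A) * adj Y * Y" using YAY A X Y by (simp add: mat_normalize)
  also have "\<dots> = Y" using XAA YAY by simp
  finally show ?thesis .
qed

lemma MP_inverse_eq:
  fixes A :: "'a :: conjugatable_field mat"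
  assumes "is_MP A B"
  shows "MP_inverse A = B"
  unfolding MP_inverse_def using assms MP_unique by blast

section \<open>The embedding phi\<close>

lemma J_mat_dim [simp]: "dim_row (J_mat n) = n" "dim_col (J_mat n) = n + 1"
  unfolding J_mat_def by auto

definition L_mat :: "nat \<Rightarrow> 'a :: conjugatable_field mat" where
  "L_mat n = mat n (n + 1) (\<lambda>(i, j). if i = j then 1 else 0)"

lemma L_mat_dim [simp]: "dim_row (L_mat n) = n" "dim_col (L_mat n) = n + 1"
  unfolding L_mat_def by auto

lemma J_mult_adjoint_L: "J_mat n * adj (L_mat n) = (1\<^sub>m n :: 'a :: conjugatable_field mat)"
proof (rule eq_matI)
  fix i k assume "i < dim_row (1\<^sub>m n :: 'a mat)" "k < dim_col (1\<^sub>m n :: 'a mat)"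
  hence i: "i < n" and k: "k < n" by auto
  have "(J_mat n * adj (L_mat n)) $$ (i, k) =
      (\<Sum>j\<in>{0..<n + 1}. (J_mat n :: 'a mat) $$ (i, j) * (if k = j then 1 else 0))"
    using i k by (simp add: scalar_prod_def L_mat_def)
  also have "\<dots> = (\<Sum>j\<in>{0..<n + 1}. if j = k then (J_mat n :: 'a mat) $$ (i, k) else 0)"
    by (intro sum.cong) auto
  also have "\<dots> = 1\<^sub>m n $$ (i, k)" using i k by (simp add: J_mat_def)
  finally show "(J_mat n * adj (L_mat n)) $$ (i, k) = (1\<^sub>m n :: 'a mat) $$ (i, k)" .
qed (auto simp: J_mat_def L_mat_def)

lemma L_mult_adjoint_J: "L_mat n * adj (J_mat n) = (1\<^sub>m n :: 'a :: conjugatable_field mat)"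
  using arg_cong[OF J_mult_adjoint_L[where 'a = 'a], of adj] by (simp add: adjoint_mult)

definition ones_col :: "nat \<Rightarrow> 'a :: conjugatable_field mat" where
  "ones_col k = mat k 1 (\<lambda>_. 1)"

lemma ones_col_dim [simp]: "dim_row (ones_col k) = k" "dim_col (ones_col k) = 1"
  unfolding ones_col_def by auto

lemma zero_sum_matsI:
  fixes M :: "'a :: conjugatable_field mat"
  assumes M: "M \<in> carrier_mat k k"
    and rows: "M * ones_col k = 0\<^sub>m k 1" and cols: "adj (ones_col k) * M = 0\<^sub>m 1 k"
  shows "M \<in> zero_sum_mats k"
  unfolding zero_sum_mats_def
proof (intro CollectI conjI allI impI)
  fix i assume i: "i < k"
  have "(M * ones_col k) $$ (i, 0) = 0" using rows i by simp
  thus "(\<Sum>j<k. M $$ (i, j)) = 0"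
    using M i by (simp add: scalar_prod_def ones_col_def atLeast0LessThan)
next
  fix j assume j: "j < k"
  have "(adj (ones_col k) * M) $$ (0, j) = 0" using cols j by simp
  thus "(\<Sum>i<k. M $$ (i, j)) = 0"
    using M j by (simp add: scalar_prod_def ones_col_def atLeast0LessThan)
qed (fact M)

lemma J_mult_ones: "J_mat n * ones_col (n + 1) = (0\<^sub>m n 1 :: 'a :: conjugatable_field mat)"
proof (rule eq_matI)
  fix i k assume "i < dim_row (0\<^sub>m n 1 :: 'a mat)" "k < dim_col (0\<^sub>m n 1 :: 'a mat)"
  hence i: "i < n" and k: "k = 0" by auto
  have "(J_mat n * ones_col (n + 1)) $$ (i, k) =
      (\<Sum>j\<in>{0..<Suc n}. if j < n then (if i = j then 1 else 0) else - 1 :: 'a)"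
    using i k by (simp add: scalar_prod_def ones_col_def J_mat_def)
  also have "\<dots> = (\<Sum>j\<in>{0..<n}. if i = j then 1 else 0 :: 'a) + (- 1)"
    by (simp add: sum.atLeast0_lessThan_Suc)
  also have "\<dots> = 0" using i by simp
  finally show "(J_mat n * ones_col (n + 1)) $$ (i, k) = (0\<^sub>m n 1 :: 'a mat) $$ (i, k)"
    using i k by simp
qed (auto simp: J_mat_def ones_col_def)

lemma phi_carrier: "X \<in> carrier_mat n n \<Longrightarrow> phi n X \<in> carrier_mat (n + 1) (n + 1)"
  unfolding phi_def by auto

lemma phi_mult:
  fixes X :: "'a :: conjugatable_field mat"
  assumes "X \<in> carrier_mat n n" "Y \<in> carrier_mat n n"
  shows "phi n X * phi n Y = phi n (twisted_prod n X Y)"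
  unfolding phi_def twisted_prod_def K_mat_def using assms by (simp add: mat_normalize)

lemma phi_adjoint:
  fixes X :: "'a :: conjugatable_field mat"
  assumes "X \<in> carrier_mat n n"
  shows "adj (phi n X) = phi n (adj X)"
  unfolding phi_def using assms by (simp add: mat_normalize)

lemma phi_left_inverse:
  fixes X :: "'a :: conjugatable_field mat"
  assumes X: "X \<in> carrier_mat n n"
  shows "L_mat n * phi n X * adj (L_mat n) = X"
proof -
  have "L_mat n * phi n X * adj (L_mat n) = (L_mat n * adj (J_mat n)) * X * (J_mat n * adj (L_mat n))"
    unfolding phi_def using X by (simp add: mat_normalize)
  thus ?thesis using X by (simp add: J_mult_adjoint_L L_mult_adjoint_J)
qed

lemma phi_eq_iff:
  fixes X :: "'a :: conjugatable_field mat"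
  assumes "X \<in> carrier_mat n n" "Y \<in> carrier_mat n n"
  shows "phi n X = phi n Y \<longleftrightarrow> X = Y"
  using phi_left_inverse[OF assms(1)] phi_left_inverse[OF assms(2)] by metis

text \<open>phi takes values in S_(n+1), because J 1 = 0.\<close>
lemma phi_zero_sum:
  fixes X :: "'a :: conjugatable_field mat"
  assumes X: "X \<in> carrier_mat n n"
  shows "phi n X \<in> zero_sum_mats (n + 1)"
proof (rule zero_sum_matsI)
  have "phi n X * ones_col (n + 1) = adj (J_mat n) * X * (J_mat n * ones_col (n + 1))"
    unfolding phi_def using X by (simp add: mat_normalize)
  also have "\<dots> = adj (J_mat n) * X * 0\<^sub>m n 1" by (simp only: J_mult_ones)
  finally show "phi n X * ones_col (n + 1) = 0\<^sub>m (n + 1) 1" using X by simp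
  have "adj (ones_col (n + 1)) * phi n X = adj (J_mat n * ones_col (n + 1)) * X * J_mat n"
    unfolding phi_def using X by (simp add: mat_normalize)
  also have "\<dots> = adj (0\<^sub>m n 1) * X * J_mat n" by (simp only: J_mult_ones)
  finally show "adj (ones_col (n + 1)) * phi n X = 0\<^sub>m 1 (n + 1)" using X by simp
qed (fact phi_carrier[OF X])

text \<open>A matrix of the forms J* Z and W J at the same time lies in the image of phi;
  explicitly it equals phi (L B L*), since L J* = I and J L* = I.\<close>
lemma phi_of_two_sided_factor:
  fixes B :: "'a :: conjugatable_field mat"
  assumes Z: "Z \<in> carrier_mat n (n + 1)" and W: "W \<in> carrier_mat (n + 1) n"
    and BZ: "B = adj (J_mat n) * Z" and BW: "B = W * J_mat n"
  shows "phi n (L_mat n * B * adj (L_mat n)) = B"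
proof -
  have "adj (J_mat n) * (L_mat n * B) = adj (J_mat n) * ((L_mat n * adj (J_mat n)) * Z)"
    using Z by (simp add: BZ mat_normalize)
  hence left: "adj (J_mat n) * (L_mat n * B) = B" using Z by (simp add: BZ L_mult_adjoint_J)
  have "B * (adj (L_mat n) * J_mat n) = W * (J_mat n * adj (L_mat n)) * J_mat n"
    using W by (simp add: BW mat_normalize)
  hence right: "B * (adj (L_mat n) * J_mat n) = B" using W by (simp add: BW J_mult_adjoint_L)
  have "phi n (L_mat n * B * adj (L_mat n)) = (adj (J_mat n) * (L_mat n * B)) * (adj (L_mat n) * J_mat n)"
    unfolding phi_def using Z by (simp add: BZ mat_normalize)
  thus ?thesis using left right by simp
qed

section \<open>Twisted-product inverses versus ordinary inverses\<close>

lemma twisted_prod_carrier [simp]: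
  "X \<in> carrier_mat n n \<Longrightarrow> Y \<in> carrier_mat n n \<Longrightarrow> twisted_prod n X Y \<in> carrier_mat n n"
  unfolding twisted_prod_def K_mat_def by auto

lemma twisted_triple_eq_iff:
  fixes X :: "'a :: conjugatable_field mat"
  assumes X: "X \<in> carrier_mat n n" and Y: "Y \<in> carrier_mat n n"
    and Z: "Z \<in> carrier_mat n n" and W: "W \<in> carrier_mat n n"
  shows "twisted_prod n (twisted_prod n X Y) Z = W \<longleftrightarrow> phi n X * phi n Y * phi n Z = phi n W"
  using X Y Z W by (simp add: phi_mult phi_eq_iff)

lemma twisted_hermitian_iff:
  fixes X :: "'a :: conjugatable_field mat"
  assumes X: "X \<in> carrier_mat n n" and Y: "Y \<in> carrier_mat n n"
  shows "adj (twisted_prod n X Y) = twisted_prod n X Y \<longleftrightarrow>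
    adj (phi n X * phi n Y) = phi n X * phi n Y"
  using X Y by (simp add: phi_mult phi_adjoint phi_eq_iff)

lemma circ_pinv_iff:
  fixes X :: "'a :: conjugatable_field mat"
  assumes X: "X \<in> carrier_mat n n" and Y: "Y \<in> carrier_mat n n"
  shows "circ_pinv n X Y \<longleftrightarrow> phi n Y \<in> zero_sum_mats (n + 1) \<and> is_pinv (phi n X) (phi n Y)"
  using phi_zero_sum[OF Y] twisted_triple_eq_iff[OF X Y X X] phi_carrier[OF X] phi_carrier[OF Y] Y
  unfolding circ_pinv_def is_pinv_def by auto

lemma circ_MP_iff:
  fixes X :: "'a :: conjugatable_field mat"
  assumes X: "X \<in> carrier_mat n n" and Y: "Y \<in> carrier_mat n n"
  shows "circ_MP n X Y \<longleftrightarrow> is_MP (phi n X) (phi n Y)"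
  using twisted_triple_eq_iff[OF X Y X X] twisted_triple_eq_iff[OF Y X Y Y]
    twisted_hermitian_iff[OF X Y] twisted_hermitian_iff[OF Y X] phi_carrier[OF X] phi_carrier[OF Y] Y
  unfolding circ_MP_def is_MP_def by auto

text \<open>The twisted-product Moore-Penrose inverse is unique, since phi is injective.\<close>
lemma circ_MP_inverse_eq:
  fixes X :: "'a :: conjugatable_field mat"
  assumes X: "X \<in> carrier_mat n n" and MP: "circ_MP n X Y"
  shows "circ_MP_inverse n X = Y"
  unfolding circ_MP_inverse_def
proof (rule the_equality[of "circ_MP n X" Y, OF MP])
  fix Y' assume MP': "circ_MP n X Y'"
  have Y: "Y \<in> carrier_mat n n" and Y': "Y' \<in> carrier_mat n n"
    using MP MP' unfolding circ_MP_def by auto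
  have "phi n Y' = phi n Y"
    using MP_unique MP MP' circ_MP_iff[OF X Y] circ_MP_iff[OF X Y'] by blast
  thus "Y' = Y" using phi_eq_iff[OF Y' Y] by simp
qed

text \<open>The Moore-Penrose inverse B of phi X lies in the image of phi: from the Penrose
  equations B = (B A)* B = A* B* B and B = B (A B)* = B B* A*, and A = J* X J.\<close>
lemma MP_of_phi_in_image:
  fixes X :: "'a :: conjugatable_ordered_field mat"
  assumes X: "X \<in> carrier_mat n n"
  obtains Y where "Y \<in> carrier_mat n n" "is_MP (phi n X) (phi n Y)"
proof -
  let ?A = "phi n X" and ?J = "J_mat n :: 'a mat"
  have A: "?A \<in> carrier_mat (n + 1) (n + 1)" using X by (rule phi_carrier)
  obtain B where MP: "is_MP ?A B" using MP_exists[OF A] by auto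
  hence B: "B \<in> carrier_mat (n + 1) (n + 1)" and BAB: "B * ?A * B = B"
    and ABh: "adj (?A * B) = ?A * B" and BAh: "adj (B * ?A) = B * ?A"
    using A unfolding is_MP_def by auto
  have adjA: "adj ?A = adj ?J * adj X * ?J" using phi_adjoint[OF X] unfolding phi_def .
  have "B = adj (B * ?A) * B" using BAB BAh by simp
  also have "\<dots> = adj ?A * adj B * B" using B A by (simp add: mat_normalize)
  also have "\<dots> = adj ?J * (adj X * ?J * adj B * B)" unfolding adjA using B X by (simp add: mat_normalize)
  finally have BZ: "B = adj ?J * (adj X * ?J * adj B * B)" .
  have "B = B * adj (?A * B)" using BAB ABh B A by (simp add: mat_normalize)
  also have "\<dots> = B * adj B * adj ?A" using B A by (simp add: mat_normalize)
  also have "\<dots> = (B * adj B * adj ?J * adj X) * ?J" unfolding adjA using B X by (simp add: mat_normalize)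
  finally have BW: "B = (B * adj B * adj ?J * adj X) * ?J" .
  have "phi n (L_mat n * B * adj (L_mat n)) = B"
    by (rule phi_of_two_sided_factor[OF _ _ BZ BW]) (use B X in auto)
  moreover have "L_mat n * B * adj (L_mat n) \<in> carrier_mat n n" using B by auto
  ultimately show ?thesis using MP that by metis
qed

lemma MP_inverse_phi:
  fixes X :: "'a :: conjugatable_ordered_field mat"
  assumes X: "X \<in> carrier_mat n n"
  shows "MP_inverse (phi n X) \<in> zero_sum_mats (n + 1) \<and>
    MP_inverse (phi n X) = phi n (circ_MP_inverse n X)"
proof -
  obtain Y where Y: "Y \<in> carrier_mat n n" and MP: "is_MP (phi n X) (phi n Y)"
    using MP_of_phi_in_image[OF X] .
  have "circ_MP_inverse n X = Y" using circ_MP_inverse_eq[OF X] circ_MP_iff[OF X Y] MP by blast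
  thus ?thesis using MP_inverse_eq[OF MP] phi_zero_sum[OF Y] by simp
qed

theorem theorem3:
  shows
  "(\<forall>n (X :: real mat) Y. X \<in> carrier_mat n n \<longrightarrow> Y \<in> carrier_mat n n \<longrightarrow>
       (circ_pinv n X Y \<longleftrightarrow> phi n Y \<in> zero_sum_mats (n + 1) \<and> is_pinv (phi n X) (phi n Y)) \<and>
       (circ_MP n X Y \<longleftrightarrow> is_MP (phi n X) (phi n Y))) \<and>
   (\<forall>n (X :: real mat). X \<in> carrier_mat n n \<longrightarrow>
       MP_inverse (phi n X) \<in> zero_sum_mats (n + 1) \<and>
       MP_inverse (phi n X) = phi n (circ_MP_inverse n X)) \<and>
   (\<forall>n (X :: complex mat) Y. X \<in> carrier_mat n n \<longrightarrow> Y \<in> carrier_mat n n \<longrightarrow>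
       (circ_pinv n X Y \<longleftrightarrow> phi n Y \<in> zero_sum_mats (n + 1) \<and> is_pinv (phi n X) (phi n Y)) \<and>
       (circ_MP n X Y \<longleftrightarrow> is_MP (phi n X) (phi n Y))) \<and>
   (\<forall>n (X :: complex mat). X \<in> carrier_mat n n \<longrightarrow>
       MP_inverse (phi n X) \<in> zero_sum_mats (n + 1) \<and>
       MP_inverse (phi n X) = phi n (circ_MP_inverse n X))"
  by (meson circ_pinv_iff circ_MP_iff MP_inverse_phi)

end
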